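(* For every integer $n\ge 2$, with $$q(n,k)=\sum_{\overline{A}\in\overline{\mathfrak{B}}_{n,k}}|\overline{A}|\prod_{i=0}^{n-2}\left[(n-i)!\right]^{\psi_i(\overline{A})},$$ one has $q(n,0)=q(n,1)=(n!)^{2n}=|\Pi_n|=|\Sigma_{n^2}|$.
   Context: $[n]=\{1,\dots,n\}$. $\mathfrak{B}_n$ is the set of $n\times n$ binary matrices and $\mathfrak{B}_{n,k}$ those with exactly $k$ ones. For $A\in\mathfrak{B}_n$, $r_k(A)$ (resp. $c_k(A)$) is the number of rows (resp. columns) of $A$ with exactly $k$ ones and $\psi_k(A)=r_k(A)+c_k(A)$. $A\sim B$ iff $B$ is obtained from $A$ by permuting rows; $\overline{A}$ is the equivalence class of $A$, $|\overline{A}|$ its cardinality, $\overline{\mathfrak{B}}_{n,k}=\mathfrak{B}_{n,k}/\!\sim$; $\psi_k$ is defined on classes via representatives. $\Pi_n$ is the set of all $n\times n$ matrices whose entries are ordered pairs $\langle i,j\rangle$, $i,j\in[n]$, such that in each row the first coordinates form a permutation of $[n]$ and in each column the second coordinates form a permutation of $[n]$. $\Sigma_{n^2}$ is the set of $n^2\times n^2$ binary matrices which, when partitioned into $n^2$ consecutive $n\times n$ blocks, contain exactly one $1$ in each row, each column and each block. *)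

theory Defs
  imports "HOL-Combinatorics.Permutations"
begin

text \<open>Matrices are indexed by [n] = {1..n}; an n x n matrix is a function on
  nat x nat that takes a fixed default value outside [n] x [n].\<close>

definition binmats :: "nat \<Rightarrow> (nat \<Rightarrow> nat \<Rightarrow> bool) set" where
  "binmats n = {A. \<forall>i j. A i j \<longrightarrow> i \<in> {1..n} \<and> j \<in> {1..n}}"

definition ones :: "nat \<Rightarrow> (nat \<Rightarrow> nat \<Rightarrow> bool) \<Rightarrow> nat" where
  "ones n A = card {(i, j). i \<in> {1..n} \<and> j \<in> {1..n} \<and> A i j}"

definition binmats_k :: "nat \<Rightarrow> nat \<Rightarrow> (nat \<Rightarrow> nat \<Rightarrow> bool) set" where
  "binmats_k n k = {A \<in> binmats n. ones n A = k}"

definition row_count :: "nat \<Rightarrow> nat \<Rightarrow> (nat \<Rightarrow> nat \<Rightarrow> bool) \<Rightarrow> nat" where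
  "row_count n k A = card {i \<in> {1..n}. card {j \<in> {1..n}. A i j} = k}"

definition col_count :: "nat \<Rightarrow> nat \<Rightarrow> (nat \<Rightarrow> nat \<Rightarrow> bool) \<Rightarrow> nat" where
  "col_count n k A = card {j \<in> {1..n}. card {i \<in> {1..n}. A i j} = k}"

definition psi :: "nat \<Rightarrow> nat \<Rightarrow> (nat \<Rightarrow> nat \<Rightarrow> bool) \<Rightarrow> nat" where
  "psi n k A = row_count n k A + col_count n k A"

definition row_equiv :: "nat \<Rightarrow> (nat \<Rightarrow> nat \<Rightarrow> bool) \<Rightarrow> (nat \<Rightarrow> nat \<Rightarrow> bool) \<Rightarrow> bool" where
  "row_equiv n A B \<longleftrightarrow> (\<exists>\<sigma>. \<sigma> permutes {1..n} \<and> (\<forall>i j. B i j = A (\<sigma> i) j))"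

definition row_rel :: "nat \<Rightarrow> nat \<Rightarrow> ((nat \<Rightarrow> nat \<Rightarrow> bool) \<times> (nat \<Rightarrow> nat \<Rightarrow> bool)) set" where
  "row_rel n k = {(A, B). A \<in> binmats_k n k \<and> B \<in> binmats_k n k \<and> row_equiv n A B}"

definition classes :: "nat \<Rightarrow> nat \<Rightarrow> (nat \<Rightarrow> nat \<Rightarrow> bool) set set" where
  "classes n k = binmats_k n k // row_rel n k"

definition psi_cls :: "nat \<Rightarrow> nat \<Rightarrow> (nat \<Rightarrow> nat \<Rightarrow> bool) set \<Rightarrow> nat" where
  "psi_cls n k X = psi n k (SOME A. A \<in> X)"

definition q :: "nat \<Rightarrow> nat \<Rightarrow> nat" where
  "q n k = (\<Sum>X\<in>classes n k. card X * (\<Prod>i = 0..n - 2. (fact (n - i)) ^ psi_cls n i X))"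

definition Pi_mats :: "nat \<Rightarrow> (nat \<Rightarrow> nat \<Rightarrow> nat \<times> nat) set" where
  "Pi_mats n = {M. (\<forall>i j. \<not> (i \<in> {1..n} \<and> j \<in> {1..n}) \<longrightarrow> M i j = (0, 0))
     \<and> (\<forall>i j. i \<in> {1..n} \<and> j \<in> {1..n} \<longrightarrow> fst (M i j) \<in> {1..n} \<and> snd (M i j) \<in> {1..n})
     \<and> (\<forall>i \<in> {1..n}. bij_betw (\<lambda>j. fst (M i j)) {1..n} {1..n})
     \<and> (\<forall>j \<in> {1..n}. bij_betw (\<lambda>i. snd (M i j)) {1..n} {1..n})}"

definition Sigma_mats :: "nat \<Rightarrow> (nat \<Rightarrow> nat \<Rightarrow> bool) set" where
  "Sigma_mats n = {A \<in> binmats (n^2).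
     (\<forall>i \<in> {1..n^2}. card {j \<in> {1..n^2}. A i j} = 1)
     \<and> (\<forall>j \<in> {1..n^2}. card {i \<in> {1..n^2}. A i j} = 1)
     \<and> (\<forall>a \<in> {1..n}. \<forall>b \<in> {1..n}.
          card {(i, j). i \<in> {(a - 1) * n + 1 .. a * n} \<and> j \<in> {(b - 1) * n + 1 .. b * n} \<and> A i j} = 1)}"

end

theory Submission
  imports Defs
begin

text \<open>A matrix in \<open>\<Pi>_n\<close> is the same as two independent families of \<open>n\<close> permutations of \<open>[n]\<close>
  (the first coordinates along the rows and the second ones along the columns), so
  \<open>|\<Pi>_n| = (n!)^(2n)\<close>.  A matrix in \<open>\<Sigma>_(n^2)\<close> has exactly one 1 in every block \<open>(a, b)\<close>; recording
  its position \<open>\<langle>r, c\<rangle>\<close> inside the block gives a matrix of pairs, and the row and column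
  conditions of \<open>\<Sigma>\<close> say precisely that these pairs form a matrix in \<open>\<Pi>_n\<close>.

  For \<open>k = 0\<close> there is a single class, the zero matrix, with \<open>\<psi>_0 = 2n\<close>.  For \<open>k = 1\<close> the
  classes are the \<open>n\<close> columns of matrix units, each of size \<open>n\<close>, with \<open>\<psi>_0 = 2(n - 1)\<close> and
  \<open>\<psi>_1 = 2\<close>; hence \<open>q(n,1) = n \<cdot> n \<cdot> (n!)^(2(n-1)) \<cdot> ((n-1)!)^2 = (n!)^(2n)\<close>.\<close>

lemma restrict_permutes:
  assumes "bij_betw f S S"
  shows "(\<lambda>x. if x \<in> S then f x else x) permutes S"
proof (rule bij_imp_permutes)
  show "bij_betw (\<lambda>x. if x \<in> S then f x else x) S S"
    using assms by (rule bij_betw_cong[THEN iffD1, rotated]) simp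
qed simp

lemma bij_betw_iff_card_fibres:
  assumes "f ` S \<subseteq> T"
  shows "bij_betw f S T \<longleftrightarrow> (\<forall>y \<in> T. card {x \<in> S. f x = y} = 1)"
proof
  assume bij: "bij_betw f S T"
  show "\<forall>y \<in> T. card {x \<in> S. f x = y} = 1"
  proof
    fix y assume "y \<in> T"
    then obtain x where "x \<in> S" "f x = y"
      using bij by (auto simp: bij_betw_def)
    with bij have "{x \<in> S. f x = y} = {x}"
      by (auto simp: bij_betw_def inj_on_def)
    then show "card {x \<in> S. f x = y} = 1" by simp
  qed
next
  assume fibres: "\<forall>y \<in> T. card {x \<in> S. f x = y} = 1"
  have "inj_on f S"
  proof (rule inj_onI)
    fix x x' assume "x \<in> S" "x' \<in> S" "f x = f x'"
    with assms fibres have "card {z \<in> S. f z = f x} = 1" by blast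
    then obtain z where "{z' \<in> S. f z' = f x} = {z}"
      by (rule card_1_singletonE)
    moreover have "x \<in> {z' \<in> S. f z' = f x}" "x' \<in> {z' \<in> S. f z' = f x}"
      using \<open>x \<in> S\<close> \<open>x' \<in> S\<close> \<open>f x = f x'\<close> by simp_all
    ultimately show "x = x'"
      by (metis singletonD)
  qed
  moreover have "T \<subseteq> f ` S"
  proof
    fix y assume "y \<in> T"
    with fibres have "card {x \<in> S. f x = y} \<noteq> 0" by simp
    then have "{x \<in> S. f x = y} \<noteq> {}" by (metis card.empty)
    then show "y \<in> f ` S" by blast
  qed
  ultimately show "bij_betw f S T"
    using assms by (auto simp: bij_betw_def)
qed

lemma card_graph:
  assumes "\<And>x. x \<in> X \<Longrightarrow> P x \<Longrightarrow> g x \<in> Y"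
  shows "card {(x, y) \<in> X \<times> Y. P x \<and> y = g x} = card {x \<in> X. P x}"
proof -
  have "{(x, y) \<in> X \<times> Y. P x \<and> y = g x} = (\<lambda>x. (x, g x)) ` {x \<in> X. P x}"
    using assms by auto
  moreover have "inj_on (\<lambda>x. (x, g x)) {x \<in> X. P x}"
    by (rule inj_onI) simp
  ultimately show ?thesis
    by (simp add: card_image)
qed

lemma card_indicator_eq:
  assumes "finite S" "a \<in> S"
  shows "card {x \<in> S. (if x = a then 1 else 0 :: nat) = k} =
    (if k = 0 then card S - 1 else if k = 1 then 1 else 0)"
proof -
  have "{x \<in> S. (if x = a then 1 else 0 :: nat) = k} =
      (if k = 0 then S - {a} else if k = 1 then {a} else {})"
    using assms by auto
  then show ?thesis
    using assms by simp
qed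

section \<open>Counting \<open>\<Pi>_n\<close>\<close>

definition perm_families :: "nat \<Rightarrow> (nat \<Rightarrow> nat \<Rightarrow> nat) set" where
  "perm_families n = {1..n} \<rightarrow>\<^sub>E {p. p permutes {1..n}}"

lemma card_perm_families: "card (perm_families n) = fact n ^ n"
  by (simp add: perm_families_def card_PiE card_permutations)

definition pair_matrix ::
    "nat \<Rightarrow> (nat \<Rightarrow> nat \<Rightarrow> nat) \<Rightarrow> (nat \<Rightarrow> nat \<Rightarrow> nat) \<Rightarrow> nat \<Rightarrow> nat \<Rightarrow> nat \<times> nat" where
  "pair_matrix n P Q i j = (if i \<in> {1..n} \<and> j \<in> {1..n} then (P i j, Q j i) else (0, 0))"

definition row_perms :: "nat \<Rightarrow> (nat \<Rightarrow> nat \<Rightarrow> nat \<times> nat) \<Rightarrow> nat \<Rightarrow> nat \<Rightarrow> nat" where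
  "row_perms n M = (\<lambda>i\<in>{1..n}. \<lambda>j. if j \<in> {1..n} then fst (M i j) else j)"

definition col_perms :: "nat \<Rightarrow> (nat \<Rightarrow> nat \<Rightarrow> nat \<times> nat) \<Rightarrow> nat \<Rightarrow> nat \<Rightarrow> nat" where
  "col_perms n M = (\<lambda>j\<in>{1..n}. \<lambda>i. if i \<in> {1..n} then snd (M i j) else i)"

lemma pair_matrix_in_Pi_mats:
  assumes P: "P \<in> perm_families n" and Q: "Q \<in> perm_families n"
  shows "pair_matrix n P Q \<in> Pi_mats n"
proof -
  have bij: "bij_betw (P i) {1..n} {1..n}" "bij_betw (Q i) {1..n} {1..n}" if "i \<in> {1..n}" for i
    using P Q that by (auto simp: perm_families_def intro: permutes_imp_bij)
  have "bij_betw (\<lambda>j. fst (pair_matrix n P Q i j)) {1..n} {1..n}" if "i \<in> {1..n}" for i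
    using bij(1)[OF that] by (rule bij_betw_cong[THEN iffD1, rotated])
      (use that in \<open>simp add: pair_matrix_def\<close>)
  moreover have "bij_betw (\<lambda>i. snd (pair_matrix n P Q i j)) {1..n} {1..n}" if "j \<in> {1..n}" for j
    using bij(2)[OF that] by (rule bij_betw_cong[THEN iffD1, rotated])
      (use that in \<open>simp add: pair_matrix_def\<close>)
  moreover have "P i j \<in> {1..n}" "Q j i \<in> {1..n}" if "i \<in> {1..n}" "j \<in> {1..n}" for i j
    using bij that by (metis bij_betw_apply)+
  ultimately show ?thesis
    unfolding Pi_mats_def by (auto simp: pair_matrix_def simp del: atLeastAtMost_iff)
qed

lemma perms_in_perm_families:
  assumes "M \<in> Pi_mats n"
  shows "row_perms n M \<in> perm_families n" and "col_perms n M \<in> perm_families n"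
proof -
  have "(\<lambda>j. if j \<in> {1..n} then fst (M i j) else j) permutes {1..n}"
    "(\<lambda>j. if j \<in> {1..n} then snd (M j i) else j) permutes {1..n}" if "i \<in> {1..n}" for i
    using assms that by (simp_all add: Pi_mats_def restrict_permutes del: atLeastAtMost_iff)
  then show "row_perms n M \<in> perm_families n" and "col_perms n M \<in> perm_families n"
    unfolding row_perms_def col_perms_def perm_families_def restrict_PiE_iff mem_Collect_eq
    by blast+
qed

lemma perms_pair_matrix:
  assumes P: "P \<in> perm_families n" and Q: "Q \<in> perm_families n"
  shows "row_perms n (pair_matrix n P Q) = P" and "col_perms n (pair_matrix n P Q) = Q"
proof -
  have "P i j = j" "Q i j = j" if "i \<in> {1..n}" "j \<notin> {1..n}" for i j
    using P Q that unfolding perm_families_def by (metis PiE_mem mem_Collect_eq permutes_not_in)+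
  with P Q show "row_perms n (pair_matrix n P Q) = P" and "col_perms n (pair_matrix n P Q) = Q"
    by (auto simp: row_perms_def col_perms_def perm_families_def pair_matrix_def fun_eq_iff
        PiE_def extensional_def)
qed

lemma pair_matrix_perms: "M \<in> Pi_mats n \<Longrightarrow> pair_matrix n (row_perms n M) (col_perms n M) = M"
  by (auto simp: row_perms_def col_perms_def Pi_mats_def pair_matrix_def fun_eq_iff)

lemma bij_betw_pair_matrix:
  "bij_betw (\<lambda>(P, Q). pair_matrix n P Q) (perm_families n \<times> perm_families n) (Pi_mats n)"
  by (rule bij_betw_byWitness[where f' = "\<lambda>M. (row_perms n M, col_perms n M)"])
    (auto simp: perms_pair_matrix pair_matrix_perms pair_matrix_in_Pi_mats perms_in_perm_families)

lemma card_Pi_mats: "card (Pi_mats n) = fact n ^ (2 * n)"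
proof -
  have "card (Pi_mats n) = card (perm_families n \<times> perm_families n)"
    using bij_betw_pair_matrix by (rule bij_betw_same_card[symmetric])
  then show ?thesis
    by (simp add: card_cartesian_product card_perm_families mult_2 power_add)
qed

section \<open>Block coordinates of \<open>\<Sigma>_(n^2)\<close>\<close>

definition block_index :: "nat \<Rightarrow> nat \<Rightarrow> nat \<Rightarrow> nat" where
  "block_index n a r = (a - 1) * n + r"

lemma block_index_eq_iff:
  assumes "a \<ge> 1" "a' \<ge> 1" "r \<in> {1..n}" "r' \<in> {1..n}"
  shows "block_index n a r = block_index n a' r' \<longleftrightarrow> a = a' \<and> r = r'"
proof
  assume "block_index n a r = block_index n a' r'"
  then have eq: "(r - 1) + (a - 1) * n = (r' - 1) + (a' - 1) * n"
    using assms by (simp add: block_index_def)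
  have "r - 1 < n" "r' - 1 < n"
    using assms by auto
  then have "(a - 1) = (a' - 1)" "r - 1 = r' - 1"
    using arg_cong[OF eq, of "\<lambda>x. x div n"] arg_cong[OF eq, of "\<lambda>x. x mod n"] by simp_all
  with assms show "a = a' \<and> r = r'"
    by auto
qed simp

lemma block_index_interval:
  assumes "a \<ge> 1"
  shows "{(a - 1) * n + 1 .. a * n} = block_index n a ` {1..n}"
proof -
  have "a * n = n + (a - 1) * n"
    using assms by (cases a) simp_all
  then show ?thesis
    by (simp add: block_index_def add.commute)
qed

lemma bij_betw_block_index:
  "bij_betw (\<lambda>(a, r). block_index n a r) ({1..n} \<times> {1..n}) {1..n^2}"
proof -
  let ?f = "\<lambda>(a, r). block_index n a r"
  have inj: "inj_on ?f ({1..n} \<times> {1..n})"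
    by (rule inj_onI) (auto simp: block_index_eq_iff)
  have "?f ` ({1..n} \<times> {1..n}) \<subseteq> {1..n^2}"
  proof clarify
    fix a r assume "a \<in> {1..n}" "r \<in> {1..n}"
    then have "block_index n a r \<le> a * n"
      using block_index_interval[of a n] by auto
    also have "\<dots> \<le> n * n"
      using \<open>a \<in> {1..n}\<close> by simp
    finally have "block_index n a r \<le> n * n" .
    then show "block_index n a r \<in> {1..n^2}"
      using \<open>r \<in> {1..n}\<close> by (simp add: block_index_def power2_eq_square)
  qed
  moreover have "card (?f ` ({1..n} \<times> {1..n})) = card {1..n^2}"
    using inj by (simp add: card_image power2_eq_square)
  ultimately show ?thesis
    using inj by (simp add: bij_betw_def card_subset_eq)
qed

lemma ball_block_index:
  "(\<forall>i \<in> {1..n^2}. P i) \<longleftrightarrow> (\<forall>a \<in> {1..n}. \<forall>r \<in> {1..n}. P (block_index n a r))"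
  using bij_betw_imp_surj_on[OF bij_betw_block_index, of n, symmetric] by auto

lemma card_block_index_Collect:
  "card {i \<in> {1..n^2}. P i} = card {(a, r) \<in> {1..n} \<times> {1..n}. P (block_index n a r)}"
proof -
  have "bij_betw (\<lambda>(a, r). block_index n a r)
      {x \<in> {1..n} \<times> {1..n}. case x of (a, r) \<Rightarrow> P (block_index n a r)} {i \<in> {1..n^2}. P i}"
    by (rule bij_betw_Collect[OF bij_betw_block_index]) auto
  then have "card {x \<in> {1..n} \<times> {1..n}. case x of (a, r) \<Rightarrow> P (block_index n a r)} =
      card {i \<in> {1..n^2}. P i}"
    by (rule bij_betw_same_card)
  moreover have "{x \<in> {1..n} \<times> {1..n}. case x of (a, r) \<Rightarrow> P (block_index n a r)} =
      {(a, r) \<in> {1..n} \<times> {1..n}. P (block_index n a r)}"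
    by auto
  ultimately show ?thesis
    by simp
qed

lemma card_block_Collect:
  assumes "a \<in> {1..n}" "b \<in> {1..n}"
  shows "card {(i, j). i \<in> {(a - 1) * n + 1 .. a * n} \<and> j \<in> {(b - 1) * n + 1 .. b * n} \<and> A i j} =
    card {(r, c) \<in> {1..n} \<times> {1..n}. A (block_index n a r) (block_index n b c)}"
proof -
  let ?f = "\<lambda>(r, c). (block_index n a r, block_index n b c)"
  have "{(i, j). i \<in> {(a - 1) * n + 1 .. a * n} \<and> j \<in> {(b - 1) * n + 1 .. b * n} \<and> A i j} =
      ?f ` {(r, c) \<in> {1..n} \<times> {1..n}. A (block_index n a r) (block_index n b c)}"
  proof -
    have "{(a - 1) * n + 1 .. a * n} = block_index n a ` {1..n}"
      "{(b - 1) * n + 1 .. b * n} = block_index n b ` {1..n}"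
      using assms by (intro block_index_interval; simp)+
    then show ?thesis
      by (auto simp: image_iff)
  qed
  moreover have "inj_on ?f ({1..n} \<times> {1..n})"
    using assms by (intro inj_onI) (auto simp: block_index_eq_iff)
  ultimately show ?thesis
    by (simp add: card_image inj_on_subset[of _ "{1..n} \<times> {1..n}"] subset_iff)
qed

lemma Sigma_mats_iff_block_coordinates:
  "A \<in> Sigma_mats n \<longleftrightarrow> A \<in> binmats (n^2) \<and>
    (\<forall>a \<in> {1..n}. \<forall>r \<in> {1..n}.
      card {(b, c) \<in> {1..n} \<times> {1..n}. A (block_index n a r) (block_index n b c)} = 1) \<and>
    (\<forall>b \<in> {1..n}. \<forall>c \<in> {1..n}.
      card {(a, r) \<in> {1..n} \<times> {1..n}. A (block_index n a r) (block_index n b c)} = 1) \<and>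
    (\<forall>a \<in> {1..n}. \<forall>b \<in> {1..n}.
      card {(r, c) \<in> {1..n} \<times> {1..n}. A (block_index n a r) (block_index n b c)} = 1)"
proof -
  have "card {(i, j). i \<in> {(a - 1) * n + 1 .. a * n} \<and> j \<in> {(b - 1) * n + 1 .. b * n} \<and> A i j} = 1
    \<longleftrightarrow> card {(r, c) \<in> {1..n} \<times> {1..n}. A (block_index n a r) (block_index n b c)} = 1"
    if "a \<in> {1..n}" "b \<in> {1..n}" for a b
    by (simp only: card_block_Collect[OF that])
  then have "(\<forall>a \<in> {1..n}. \<forall>b \<in> {1..n}.
      card {(i, j). i \<in> {(a - 1) * n + 1 .. a * n} \<and> j \<in> {(b - 1) * n + 1 .. b * n} \<and> A i j} = 1)
    \<longleftrightarrow> (\<forall>a \<in> {1..n}. \<forall>b \<in> {1..n}.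
      card {(r, c) \<in> {1..n} \<times> {1..n}. A (block_index n a r) (block_index n b c)} = 1)"
    by (intro ball_cong refl)
  then show ?thesis
    unfolding Sigma_mats_def mem_Collect_eq ball_block_index card_block_index_Collect[of n]
    by (simp only:)
qed


lemma Pi_mats_iff_card_fibres:
  assumes M_outside: "\<And>a b. \<not> (a \<in> {1..n} \<and> b \<in> {1..n}) \<Longrightarrow> M a b = (0, 0)"
    and M_range: "\<And>a b. a \<in> {1..n} \<Longrightarrow> b \<in> {1..n} \<Longrightarrow> M a b \<in> {1..n} \<times> {1..n}"
  shows "M \<in> Pi_mats n \<longleftrightarrow>
    (\<forall>a \<in> {1..n}. \<forall>r \<in> {1..n}. card {b \<in> {1..n}. fst (M a b) = r} = 1) \<and>
    (\<forall>b \<in> {1..n}. \<forall>c \<in> {1..n}. card {a \<in> {1..n}. snd (M a b) = c} = 1)"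
proof -
  have "M \<in> Pi_mats n \<longleftrightarrow> (\<forall>a \<in> {1..n}. bij_betw (\<lambda>b. fst (M a b)) {1..n} {1..n}) \<and>
      (\<forall>b \<in> {1..n}. bij_betw (\<lambda>a. snd (M a b)) {1..n} {1..n})"
    using M_outside M_range unfolding Pi_mats_def mem_Collect_eq mem_Times_iff by blast
  also have "\<dots> \<longleftrightarrow>
      (\<forall>a \<in> {1..n}. \<forall>r \<in> {1..n}. card {b \<in> {1..n}. fst (M a b) = r} = 1) \<and>
      (\<forall>b \<in> {1..n}. \<forall>c \<in> {1..n}. card {a \<in> {1..n}. snd (M a b) = c} = 1)"
    by (intro conj_cong ball_cong refl bij_betw_iff_card_fibres)
      (use M_range in \<open>auto simp: mem_Times_iff\<close>)
  finally show ?thesis .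
qed

text \<open>Row \<open>(a, r)\<close> of \<open>A\<close> meets the ones of the blocks \<open>(a, b)\<close> with \<open>fst (M a b) = r\<close>, one per
  block, so the row condition of \<open>\<Sigma>\<close> is the fibre condition for bijectivity of \<open>b \<mapsto> fst (M a b)\<close>.\<close>

lemma Pi_mats_iff_Sigma_mats:
  assumes M_outside: "\<And>a b. \<not> (a \<in> {1..n} \<and> b \<in> {1..n}) \<Longrightarrow> M a b = (0, 0)"
    and M_range: "\<And>a b. a \<in> {1..n} \<Longrightarrow> b \<in> {1..n} \<Longrightarrow> M a b \<in> {1..n} \<times> {1..n}"
    and A: "A \<in> binmats (n^2)"
    and match: "\<And>a b r c. a \<in> {1..n} \<Longrightarrow> b \<in> {1..n} \<Longrightarrow> r \<in> {1..n} \<Longrightarrow> c \<in> {1..n} \<Longrightarrow>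
      A (block_index n a r) (block_index n b c) \<longleftrightarrow> M a b = (r, c)"
  shows "M \<in> Pi_mats n \<longleftrightarrow> A \<in> Sigma_mats n"
proof -
  have rows: "card {(b, c) \<in> {1..n} \<times> {1..n}. A (block_index n a r) (block_index n b c)} =
      card {b \<in> {1..n}. fst (M a b) = r}" if "a \<in> {1..n}" "r \<in> {1..n}" for a r
  proof -
    have "{(b, c) \<in> {1..n} \<times> {1..n}. A (block_index n a r) (block_index n b c)} =
        {(b, c) \<in> {1..n} \<times> {1..n}. fst (M a b) = r \<and> c = snd (M a b)}"
      using that by (auto simp: match prod_eq_iff)
    also have "card \<dots> = card {b \<in> {1..n}. fst (M a b) = r}"
      by (rule card_graph) (use M_range that in \<open>auto simp: mem_Times_iff\<close>)
    finally show ?thesis .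
  qed
  have cols: "card {(a, r) \<in> {1..n} \<times> {1..n}. A (block_index n a r) (block_index n b c)} =
      card {a \<in> {1..n}. snd (M a b) = c}" if "b \<in> {1..n}" "c \<in> {1..n}" for b c
  proof -
    have "{(a, r) \<in> {1..n} \<times> {1..n}. A (block_index n a r) (block_index n b c)} =
        {(a, r) \<in> {1..n} \<times> {1..n}. snd (M a b) = c \<and> r = fst (M a b)}"
      using that by (auto simp: match prod_eq_iff)
    also have "card \<dots> = card {a \<in> {1..n}. snd (M a b) = c}"
      by (rule card_graph) (use M_range that in \<open>auto simp: mem_Times_iff\<close>)
    finally show ?thesis .
  qed
  have blocks: "card {(r, c) \<in> {1..n} \<times> {1..n}. A (block_index n a r) (block_index n b c)} = 1"
    if "a \<in> {1..n}" "b \<in> {1..n}" for a b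
  proof -
    have "{(r, c) \<in> {1..n} \<times> {1..n}. A (block_index n a r) (block_index n b c)} = {M a b}"
      using that M_range[OF that] by (auto simp: match)
    then show ?thesis by simp
  qed
  have "M \<in> Pi_mats n \<longleftrightarrow>
      (\<forall>a \<in> {1..n}. \<forall>r \<in> {1..n}. card {b \<in> {1..n}. fst (M a b) = r} = 1) \<and>
      (\<forall>b \<in> {1..n}. \<forall>c \<in> {1..n}. card {a \<in> {1..n}. snd (M a b) = c} = 1)"
    using M_outside M_range by (rule Pi_mats_iff_card_fibres)
  also have "\<dots> \<longleftrightarrow>
      (\<forall>a \<in> {1..n}. \<forall>r \<in> {1..n}.
        card {(b, c) \<in> {1..n} \<times> {1..n}. A (block_index n a r) (block_index n b c)} = 1) \<and>
      (\<forall>b \<in> {1..n}. \<forall>c \<in> {1..n}.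
        card {(a, r) \<in> {1..n} \<times> {1..n}. A (block_index n a r) (block_index n b c)} = 1)"
    by (intro conj_cong ball_cong refl) (simp_all only: rows cols)
  also have "\<dots> \<longleftrightarrow> A \<in> Sigma_mats n"
    unfolding Sigma_mats_iff_block_coordinates using A blocks by blast
  finally show ?thesis .
qed

definition block_matrix :: "nat \<Rightarrow> (nat \<Rightarrow> nat \<Rightarrow> nat \<times> nat) \<Rightarrow> nat \<Rightarrow> nat \<Rightarrow> bool" where
  "block_matrix n M i j \<longleftrightarrow> (\<exists>a \<in> {1..n}. \<exists>b \<in> {1..n}. \<exists>r \<in> {1..n}. \<exists>c \<in> {1..n}.
     i = block_index n a r \<and> j = block_index n b c \<and> M a b = (r, c))"

lemma block_matrix_block_index:
  assumes "a \<in> {1..n}" "b \<in> {1..n}" "r \<in> {1..n}" "c \<in> {1..n}"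
  shows "block_matrix n M (block_index n a r) (block_index n b c) \<longleftrightarrow> M a b = (r, c)"
  using assms by (auto simp: block_matrix_def block_index_eq_iff)

lemma block_index_mem:
  "a \<in> {1..n} \<Longrightarrow> r \<in> {1..n} \<Longrightarrow> block_index n a r \<in> {1..n^2}"
  using bij_betw_apply[OF bij_betw_block_index, of "(a, r)" n] by simp

lemma block_matrix_in_binmats: "block_matrix n M \<in> binmats (n^2)"
  unfolding binmats_def block_matrix_def by (blast intro: block_index_mem)

lemma binmats_eqI_block_index:
  assumes "A \<in> binmats (n^2)" "B \<in> binmats (n^2)"
    and "\<And>a b r c. a \<in> {1..n} \<Longrightarrow> b \<in> {1..n} \<Longrightarrow> r \<in> {1..n} \<Longrightarrow> c \<in> {1..n} \<Longrightarrow>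
      A (block_index n a r) (block_index n b c) = B (block_index n a r) (block_index n b c)"
  shows "A = B"
proof (intro ext)
  fix i j
  show "A i j = B i j"
  proof (cases "i \<in> {1..n^2} \<and> j \<in> {1..n^2}")
    case True
    then show ?thesis
      using assms(3) ball_block_index[of n "\<lambda>i. \<forall>j \<in> {1..n^2}. A i j = B i j"]
        ball_block_index[of n "\<lambda>j. A _ j = B _ j"] by blast
  next
    case False
    then show ?thesis
      using assms(1,2) by (auto simp: binmats_def)
  qed
qed

definition block_positions :: "nat \<Rightarrow> (nat \<Rightarrow> nat \<Rightarrow> bool) \<Rightarrow> nat \<Rightarrow> nat \<Rightarrow> nat \<times> nat" where
  "block_positions n A a b = (if a \<in> {1..n} \<and> b \<in> {1..n}
     then the_elem {(r, c) \<in> {1..n} \<times> {1..n}. A (block_index n a r) (block_index n b c)}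
     else (0, 0))"

lemma Sigma_mats_block_positions:
  assumes "A \<in> Sigma_mats n" "a \<in> {1..n}" "b \<in> {1..n}"
  shows "{(r, c) \<in> {1..n} \<times> {1..n}. A (block_index n a r) (block_index n b c)} =
    {block_positions n A a b}"
proof -
  have "card {(r, c) \<in> {1..n} \<times> {1..n}. A (block_index n a r) (block_index n b c)} = 1"
    using assms unfolding Sigma_mats_iff_block_coordinates by blast
  then obtain x where "{(r, c) \<in> {1..n} \<times> {1..n}. A (block_index n a r) (block_index n b c)} = {x}"
    by (rule card_1_singletonE)
  then show ?thesis
    using assms(2,3) by (simp add: block_positions_def)
qed

lemma Pi_mats_outside: "M \<in> Pi_mats n \<Longrightarrow> \<not> (a \<in> {1..n} \<and> b \<in> {1..n}) \<Longrightarrow> M a b = (0, 0)"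
  by (simp add: Pi_mats_def)

lemma Pi_mats_range: "M \<in> Pi_mats n \<Longrightarrow> a \<in> {1..n} \<Longrightarrow> b \<in> {1..n} \<Longrightarrow> M a b \<in> {1..n} \<times> {1..n}"
  by (auto simp: Pi_mats_def mem_Times_iff)

lemma block_matrix_in_Sigma_mats:
  assumes "M \<in> Pi_mats n"
  shows "block_matrix n M \<in> Sigma_mats n"
  using Pi_mats_iff_Sigma_mats[where M = M and A = "block_matrix n M", OF Pi_mats_outside[OF assms]
      Pi_mats_range[OF assms] block_matrix_in_binmats block_matrix_block_index] assms
  by blast

lemma inj_on_block_matrix: "inj_on (block_matrix n) (Pi_mats n)"
proof (rule inj_onI)
  fix M M' assume M: "M \<in> Pi_mats n" and M': "M' \<in> Pi_mats n"
    and eq: "block_matrix n M = block_matrix n M'"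
  show "M = M'"
  proof (intro ext)
    fix a b
    show "M a b = M' a b"
    proof (cases "a \<in> {1..n} \<and> b \<in> {1..n}")
      case True
      with Pi_mats_range[OF M] obtain r c where "r \<in> {1..n}" "c \<in> {1..n}" "M a b = (r, c)"
        by blast
      with True eq show ?thesis
        by (metis block_matrix_block_index)
    next
      case False
      with M M' show ?thesis
        by (simp add: Pi_mats_outside)
    qed
  qed
qed

lemma block_positions_range:
  assumes "A \<in> Sigma_mats n" "a \<in> {1..n}" "b \<in> {1..n}"
  shows "block_positions n A a b \<in> {1..n} \<times> {1..n}"
proof -
  have "block_positions n A a b \<in>
      {(r, c) \<in> {1..n} \<times> {1..n}. A (block_index n a r) (block_index n b c)}"
    unfolding Sigma_mats_block_positions[OF assms] by simp
  then show ?thesis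
    by (cases "block_positions n A a b") auto
qed

lemma block_positions_eq_iff:
  assumes "A \<in> Sigma_mats n" "a \<in> {1..n}" "b \<in> {1..n}" "r \<in> {1..n}" "c \<in> {1..n}"
  shows "A (block_index n a r) (block_index n b c) \<longleftrightarrow> block_positions n A a b = (r, c)"
proof -
  have "(r, c) \<in> {(r, c) \<in> {1..n} \<times> {1..n}. A (block_index n a r) (block_index n b c)}
      \<longleftrightarrow> (r, c) \<in> {block_positions n A a b}"
    unfolding Sigma_mats_block_positions[OF assms(1-3)] ..
  with assms(4,5) show ?thesis
    by auto
qed

lemma block_positions_in_Pi_mats:
  assumes A: "A \<in> Sigma_mats n"
  shows "block_positions n A \<in> Pi_mats n"
proof -
  have "A \<in> binmats (n^2)"
    using A by (simp add: Sigma_mats_def)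
  moreover have "block_positions n A a b = (0, 0)" if "\<not> (a \<in> {1..n} \<and> b \<in> {1..n})" for a b
    unfolding block_positions_def using that by (rule if_not_P)
  ultimately show ?thesis
    using Pi_mats_iff_Sigma_mats[where M = "block_positions n A" and A = A]
      block_positions_range[OF A] block_positions_eq_iff[OF A] A
    by blast
qed

lemma block_matrix_block_positions:
  assumes A: "A \<in> Sigma_mats n"
  shows "block_matrix n (block_positions n A) = A"
proof (rule binmats_eqI_block_index[OF block_matrix_in_binmats])
  show "A \<in> binmats (n^2)"
    using A by (simp add: Sigma_mats_def)
qed (metis block_matrix_block_index block_positions_eq_iff[OF A])

lemma bij_betw_block_matrix: "bij_betw (block_matrix n) (Pi_mats n) (Sigma_mats n)"
proof (rule bij_betw_imageI[OF inj_on_block_matrix])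
  show "block_matrix n ` Pi_mats n = Sigma_mats n"
  proof
    show "block_matrix n ` Pi_mats n \<subseteq> Sigma_mats n"
      using block_matrix_in_Sigma_mats by blast
    show "Sigma_mats n \<subseteq> block_matrix n ` Pi_mats n"
    proof
      fix A assume A: "A \<in> Sigma_mats n"
      show "A \<in> block_matrix n ` Pi_mats n"
        using block_matrix_block_positions[OF A, symmetric] block_positions_in_Pi_mats[OF A]
        by (rule image_eqI)
    qed
  qed
qed

lemma card_Sigma_mats: "card (Sigma_mats n) = fact n ^ (2 * n)"
  using bij_betw_same_card[OF bij_betw_block_matrix] card_Pi_mats by simp

section \<open>The sums \<open>q n 0\<close> and \<open>q n 1\<close>\<close>

lemma prod_fact_power_two_terms:
  fixes e :: "nat \<Rightarrow> nat"
  assumes "n \<ge> 2" and "\<And>i. i \<ge> 2 \<Longrightarrow> e i = 0"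
  shows "(\<Prod>i = 0..n - 2. fact (n - i) ^ e i) = (fact n ^ e 0 * fact (n - 1) ^ e 1 :: nat)"
proof (cases "n = 2")
  case True
  \<comment> \<open>the factor for \<open>i = 1\<close> is missing from the product, but then \<open>fact (n - 1) = 1\<close>\<close>
  then show ?thesis by simp
next
  case False
  with assms(1) have "Suc 0 \<le> n - 2" by simp
  then have "(\<Prod>i = 0..n - 2. fact (n - i) ^ e i) =
      fact n ^ e 0 * (fact (n - 1) ^ e 1 * (\<Prod>i = 2..n - 2. fact (n - i) ^ e i) :: nat)"
    by (simp add: prod.atLeast_Suc_atMost numeral_2_eq_2)
  also have "(\<Prod>i = 2..n - 2. fact (n - i) ^ e i) = (1 :: nat)"
    using assms(2) by (intro prod.neutral) simp
  finally show ?thesis by simp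
qed

lemma psi_cls_eqI:
  assumes "X \<noteq> {}" and "\<And>A. A \<in> X \<Longrightarrow> psi n k A = p"
  shows "psi_cls n k X = p"
  using assms some_in_eq unfolding psi_cls_def by metis

lemma psi_cls_singleton: "psi_cls n k {A} = psi n k A"
  by (simp add: psi_cls_def)

lemma col_count_eq_row_count_transpose: "col_count n k A = row_count n k (\<lambda>i j. A j i)"
  by (simp add: col_count_def row_count_def)

lemma finite_ones_set: "finite {(i, j). i \<in> {1..n::nat} \<and> j \<in> {1..n} \<and> A i j}"
  by (rule finite_subset[of _ "{1..n} \<times> {1..n}"]) auto

lemma binmats_k_0: "binmats_k n 0 = {\<lambda>i j. False}"
proof (intro set_eqI iffI)
  fix A assume "A \<in> binmats_k n 0"
  then have A: "A \<in> binmats n" and empty: "{(i, j). i \<in> {1..n} \<and> j \<in> {1..n} \<and> A i j} = {}"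
    using finite_ones_set[of n A] by (simp_all add: binmats_k_def ones_def)
  have "\<not> A i j" for i j
  proof
    assume "A i j"
    with A have "(i, j) \<in> {(i, j). i \<in> {1..n} \<and> j \<in> {1..n} \<and> A i j}"
      by (simp add: binmats_def)
    with empty show False
      by blast
  qed
  then show "A \<in> {\<lambda>i j. False}"
    by (simp add: fun_eq_iff)
next
  fix A :: "nat \<Rightarrow> nat \<Rightarrow> bool" assume "A \<in> {\<lambda>i j. False}"
  then show "A \<in> binmats_k n 0"
    by (simp add: binmats_k_def binmats_def ones_def)
qed

lemma classes_0: "classes n 0 = {{\<lambda>i j. False}}"
proof -
  have "row_equiv n (\<lambda>i j. False) (\<lambda>i j. False)"
    unfolding row_equiv_def using permutes_id by blast
  then have "row_rel n 0 `` {\<lambda>i j. False} = {\<lambda>i j. False}"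
    by (auto simp: row_rel_def binmats_k_0)
  then show ?thesis
    by (simp add: classes_def binmats_k_0 quotient_def)
qed

lemma psi_zero_matrix: "psi n k (\<lambda>i j. False) = (if k = 0 then 2 * n else 0)"
proof -
  have "{i \<in> {1..n}. card {j \<in> {1..n}. False} = k} = (if k = 0 then {1..n} else {})"
    by auto
  then show ?thesis
    by (simp add: psi_def row_count_def col_count_def)
qed

lemma q_0:
  assumes "n \<ge> 2"
  shows "q n 0 = fact n ^ (2 * n)"
proof -
  have "(\<Prod>i = 0..n - 2. fact (n - i) ^ psi n i (\<lambda>i j. False)) = (fact n ^ (2 * n) :: nat)"
    using assms by (subst prod_fact_power_two_terms) (simp_all add: psi_zero_matrix)
  then show ?thesis
    by (simp add: q_def classes_0 psi_cls_singleton)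
qed

definition matrix_unit :: "nat \<Rightarrow> nat \<Rightarrow> nat \<Rightarrow> nat \<Rightarrow> bool" where
  "matrix_unit a b i j \<longleftrightarrow> i = a \<and> j = b"

lemma matrix_unit_eq_iff: "matrix_unit a b = matrix_unit a' b' \<longleftrightarrow> a = a' \<and> b = b'"
  by (auto simp: matrix_unit_def fun_eq_iff)

lemma matrix_unit_in_binmats_k:
  assumes "a \<in> {1..n}" "b \<in> {1..n}"
  shows "matrix_unit a b \<in> binmats_k n 1"
proof -
  have "{(i, j). i \<in> {1..n} \<and> j \<in> {1..n} \<and> matrix_unit a b i j} = {(a, b)}"
    using assms by (auto simp: matrix_unit_def)
  with assms show ?thesis
    by (simp add: binmats_k_def binmats_def ones_def matrix_unit_def)
qed

lemma binmats_k_1: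
  "binmats_k n 1 = {matrix_unit a b | a b. a \<in> {1..n} \<and> b \<in> {1..n}}"
proof (intro set_eqI iffI)
  fix A assume "A \<in> binmats_k n 1"
  then have A: "A \<in> binmats n" and card: "card {(i, j). i \<in> {1..n} \<and> j \<in> {1..n} \<and> A i j} = 1"
    by (simp_all add: binmats_k_def ones_def)
  from card obtain x where "{(i, j). i \<in> {1..n} \<and> j \<in> {1..n} \<and> A i j} = {x}"
    by (rule card_1_singletonE)
  moreover obtain a b where "x = (a, b)"
    by (cases x)
  ultimately have ab: "{(i, j). i \<in> {1..n} \<and> j \<in> {1..n} \<and> A i j} = {(a, b)}"
    by simp
  then have "a \<in> {1..n}" "b \<in> {1..n}"
    by blast+
  moreover have "A = matrix_unit a b"
  proof (intro ext)
    fix i j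
    have "A i j \<longleftrightarrow> (i, j) \<in> {(i, j). i \<in> {1..n} \<and> j \<in> {1..n} \<and> A i j}"
      using A by (auto simp: binmats_def)
    also have "\<dots> \<longleftrightarrow> (i, j) \<in> {(a, b)}"
      by (simp only: ab)
    finally show "A i j = matrix_unit a b i j"
      by (simp add: matrix_unit_def)
  qed
  ultimately show "A \<in> {matrix_unit a b | a b. a \<in> {1..n} \<and> b \<in> {1..n}}"
    by blast
qed (blast intro: matrix_unit_in_binmats_k)

lemma row_rel_1_matrix_unit:
  assumes "a \<in> {1..n}" "b \<in> {1..n}"
  shows "row_rel n 1 `` {matrix_unit a b} = (\<lambda>a'. matrix_unit a' b) ` {1..n}"
proof (intro set_eqI iffI)
  fix B assume "B \<in> row_rel n 1 `` {matrix_unit a b}"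
  then obtain \<sigma> where \<sigma>: "\<sigma> permutes {1..n}" and B: "\<And>i j. B i j = matrix_unit a b (\<sigma> i) j"
    by (auto simp: row_rel_def row_equiv_def)
  have "B = matrix_unit (inv \<sigma> a) b"
    by (auto simp: B matrix_unit_def fun_eq_iff permutes_inv_eq[OF \<sigma>] permutes_inverses[OF \<sigma>])
  moreover have "inv \<sigma> a \<in> {1..n}"
    using permutes_in_image[OF permutes_inv[OF \<sigma>]] assms(1) by blast
  ultimately show "B \<in> (\<lambda>a'. matrix_unit a' b) ` {1..n}"
    by blast
next
  fix B assume "B \<in> (\<lambda>a'. matrix_unit a' b) ` {1..n}"
  then obtain a' where a': "a' \<in> {1..n}" and B: "B = matrix_unit a' b"
    by blast
  have "Transposition.transpose a a' permutes {1..n}"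
    using assms(1) a' by (rule permutes_swap_id)
  moreover have "B i j = matrix_unit a b (Transposition.transpose a a' i) j" for i j
    by (auto simp: B matrix_unit_def transpose_eq_iff)
  ultimately have "row_equiv n (matrix_unit a b) B"
    unfolding row_equiv_def by blast
  then show "B \<in> row_rel n 1 `` {matrix_unit a b}"
    using matrix_unit_in_binmats_k[OF assms] matrix_unit_in_binmats_k[OF a' assms(2)] B
    unfolding row_rel_def by blast
qed

lemma classes_1:
  assumes "n \<ge> 1"
  shows "classes n 1 = (\<lambda>b. (\<lambda>a. matrix_unit a b) ` {1..n}) ` {1..n}"
proof (intro set_eqI iffI)
  fix X assume "X \<in> classes n 1"
  then obtain a b where "a \<in> {1..n}" "b \<in> {1..n}" "X = row_rel n 1 `` {matrix_unit a b}"
    unfolding classes_def binmats_k_1 by (auto elim!: quotientE)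
  then show "X \<in> (\<lambda>b. (\<lambda>a. matrix_unit a b) ` {1..n}) ` {1..n}"
    by (metis row_rel_1_matrix_unit imageI)
next
  fix X assume "X \<in> (\<lambda>b. (\<lambda>a. matrix_unit a b) ` {1..n}) ` {1..n}"
  then obtain b where b: "b \<in> {1..n}" and X: "X = (\<lambda>a. matrix_unit a b) ` {1..n}"
    by blast
  have one: "1 \<in> {1..n}"
    using assms by simp
  have "X = row_rel n 1 `` {matrix_unit 1 b}"
    by (simp only: X row_rel_1_matrix_unit[OF one b])
  with matrix_unit_in_binmats_k[OF one b] show "X \<in> classes n 1"
    unfolding classes_def by (blast intro: quotientI)
qed

lemma card_matrix_unit_class: "card ((\<lambda>a. matrix_unit a b) ` {1..n}) = n"
  by (simp add: card_image inj_on_def matrix_unit_eq_iff)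

lemma inj_on_matrix_unit_classes: "inj_on (\<lambda>b. (\<lambda>a. matrix_unit a b) ` {1..n}) {1..n}"
proof (rule inj_onI)
  fix b b' assume "b \<in> {1..n}" "b' \<in> {1..n}"
    and eq: "(\<lambda>a. matrix_unit a b) ` {1..n} = (\<lambda>a. matrix_unit a b') ` {1..n}"
  then have "matrix_unit 1 b \<in> (\<lambda>a. matrix_unit a b') ` {1..n}"
    by auto
  then show "b = b'"
    by (auto simp: matrix_unit_eq_iff)
qed

lemma row_count_matrix_unit:
  assumes "a \<in> {1..n}" "b \<in> {1..n}"
  shows "row_count n k (matrix_unit a b) = (if k = 0 then n - 1 else if k = 1 then 1 else 0)"
proof -
  have "card {j \<in> {1..n}. matrix_unit a b i j} = (if i = a then 1 else 0)" for i
  proof -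
    have "{j \<in> {1..n}. matrix_unit a b i j} = (if i = a then {b} else {})"
      using assms(2) by (auto simp: matrix_unit_def)
    then show ?thesis by simp
  qed
  then show ?thesis
    using card_indicator_eq[of "{1..n}" a k] assms(1) by (simp add: row_count_def)
qed

lemma psi_matrix_unit:
  assumes "a \<in> {1..n}" "b \<in> {1..n}"
  shows "psi n k (matrix_unit a b) = (if k = 0 then 2 * (n - 1) else if k = 1 then 2 else 0)"
proof -
  have "(\<lambda>i j. matrix_unit a b j i) = matrix_unit b a"
    by (auto simp: matrix_unit_def fun_eq_iff)
  moreover have "n \<ge> 1"
    using assms by simp
  ultimately show ?thesis
    using assms by (auto simp: psi_def col_count_eq_row_count_transpose row_count_matrix_unit)
qed

lemma q_1:
  assumes "n \<ge> 2"
  shows "q n 1 = fact n ^ (2 * n)"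
proof -
  let ?P = "fact n ^ (2 * (n - 1)) * fact (n - 1) ^ 2 :: nat"
  have "(\<Prod>i = 0..n - 2. fact (n - i) ^ psi_cls n i ((\<lambda>a. matrix_unit a b) ` {1..n})) = ?P"
    if "b \<in> {1..n}" for b
  proof -
    have "psi_cls n i ((\<lambda>a. matrix_unit a b) ` {1..n}) =
        (if i = 0 then 2 * (n - 1) else if i = 1 then 2 else 0)" for i
      using that assms by (intro psi_cls_eqI) (auto simp: psi_matrix_unit)
    then show ?thesis
      using assms by (simp add: prod_fact_power_two_terms)
  qed
  then have "q n 1 = n * (n * ?P)"
    unfolding q_def classes_1[OF order.trans[OF one_le_numeral assms]]
      sum.reindex[OF inj_on_matrix_unit_classes] o_def card_matrix_unit_class
    by simp
  also have "\<dots> = (n * fact (n - 1)) ^ 2 * fact n ^ (2 * (n - 1))"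
    by (simp add: power2_eq_square)
  also have "n * fact (n - 1) = (fact n :: nat)"
    using assms by (simp add: fact_reduce)
  also have "fact n ^ 2 * fact n ^ (2 * (n - 1)) = (fact n ^ (2 * n) :: nat)"
  proof -
    have "2 + 2 * (n - 1) = 2 * n"
      using assms by simp
    then show ?thesis
      by (metis power_add)
  qed
  finally show ?thesis .
qed

theorem mainTheorem4:
  fixes n :: nat
  assumes "n \<ge> 2"
  shows "q n 0 = fact n ^ (2 * n) \<and> q n 1 = fact n ^ (2 * n)
       \<and> card (Pi_mats n) = fact n ^ (2 * n) \<and> card (Sigma_mats n) = fact n ^ (2 * n)"
  using q_0[OF assms] q_1[OF assms] card_Pi_mats card_Sigma_mats by blast

end
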